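(* Let $s_0,t_0\ge 1$ be real numbers and let $\mathcal T$ be the infinite rooted tree of nodes generated from $(s_0,t_0)$ by the recursive rule described in the context. Put $p=(t_0-s_0)/2$. Then every node $N$ of $\mathcal T$, located at $(x,y)$, of depth $d$ and carrying parameters $(s,t)$, satisfies: (1) $s\ge 1$ and $t\ge 1$; (2) $(t-s)/2=p$; (3) the points $(x,y)+2^{-d}(-1,s)=(x-2^{-d},\,y+2^{-d}s)$ and $(x,y)+2^{-d}(1,t)=(x+2^{-d},\,y+2^{-d}t)$ both lie on the segment of $\mathbb R^2$ with extremities $(-1,s_0)$ and $(1,t_0)$.
   Context: Points of $\mathbb R^2$ are written $(x,y)$ (abscissa = space, ordinate = time). Given real numbers $s_0,t_0\ge 1$, a tree $\mathcal T$ is built recursively. Each node has a location $(x,y)\in\mathbb R^2$, a depth $d\in\mathbb N$ (the number of its ancestors that are split nodes), and a pair of real parameters $(s,t)$. The root is at $(0,0)$, has depth $0$ and parameters $(s_0,t_0)$. A node at $(x,y)$ of depth $d$ with parameters $(s,t)$ is: - a delay node if $s\ge 2$ and $t\ge 2$; it then has exactly one child, located at $(x,\,y+2^{-d})$, of depth $d$, with parameters $(s-1,\,t-1)$; - a split node otherwise (i.e. if $s<2$ or $t<2$); it then has exactly two children, both of depth $d+1$: a left child at $(x-2^{-(d+1)},\,y+2^{-(d+1)})$ with parameters $\bigl(2(s-\tfrac12),\,2(\tfrac{s+t}{2}-\tfrac12)\bigr)=(2s-1,\,s+t-1)$, and a right child at $(x+2^{-(d+1)},\,y+2^{-(d+1)})$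 with parameters $\bigl(2(\tfrac{s+t}{2}-\tfrac12),\,2(t-\tfrac12)\bigr)=(s+t-1,\,2t-1)$. The recursion never stops, so $\mathcal T$ is infinite. (Interpretation: a node at depth $d$ with parameters $(s,t)$ "targets" the segment from $(x,y)+2^{-d}(-1,s)$ to $(x,y)+2^{-d}(1,t)$.) *)

theory Defs
  imports "HOL-Analysis.Analysis"
begin

text \<open>A node is recorded as its location (x,y), its depth d, and its parameters (s,t).\<close>
inductive tree_node :: "real \<Rightarrow> real \<Rightarrow> real \<Rightarrow> real \<Rightarrow> nat \<Rightarrow> real \<Rightarrow> real \<Rightarrow> bool"
  for s0 t0 :: real where
  root: "tree_node s0 t0 0 0 0 s0 t0"
| delay: "tree_node s0 t0 x y d s t \<Longrightarrow> s \<ge> 2 \<Longrightarrow> t \<ge> 2 \<Longrightarrow>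
          tree_node s0 t0 x (y + 1 / 2 ^ d) d (s - 1) (t - 1)"
| split_left: "tree_node s0 t0 x y d s t \<Longrightarrow> s < 2 \<or> t < 2 \<Longrightarrow>
          tree_node s0 t0 (x - 1 / 2 ^ (d + 1)) (y + 1 / 2 ^ (d + 1)) (d + 1)
            (2 * (s - 1/2)) (2 * ((s + t) / 2 - 1/2))"
| split_right: "tree_node s0 t0 x y d s t \<Longrightarrow> s < 2 \<or> t < 2 \<Longrightarrow>
          tree_node s0 t0 (x + 1 / 2 ^ (d + 1)) (y + 1 / 2 ^ (d + 1)) (d + 1)
            (2 * ((s + t) / 2 - 1/2)) (2 * (t - 1/2))"

end

theory Submission
  imports Defs
begin

text \<open>A node at depth \<open>d\<close> with parameters \<open>(s, t)\<close> targets the segment from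
  \<open>(x, y) + 2\<^sup>-\<^sup>d (-1, s)\<close> to \<open>(x, y) + 2\<^sup>-\<^sup>d (1, t)\<close>. A delay node has the same target
  as its parent, and the two children of a split node target the two halves of the
  parent's target. Hence every target endpoint is obtained from the root's by taking
  midpoints, and so stays in every convex set containing the root's target. The
  parameters keep their difference \<open>t - s\<close>, and stay \<open>\<ge> 1\<close> because a delay is only
  performed when both are \<open>\<ge> 2\<close>.\<close>

definition target_left :: "real \<Rightarrow> real \<Rightarrow> nat \<Rightarrow> real \<Rightarrow> real \<times> real" where
  "target_left x y d s = (x - 1 / 2 ^ d, y + s / 2 ^ d)"

definition target_right :: "real \<Rightarrow> real \<Rightarrow> nat \<Rightarrow> real \<Rightarrow> real \<times> real" where
  "target_right x y d t = (x + 1 / 2 ^ d, y + t / 2 ^ d)"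

lemma target_left_delay: "target_left x (y + 1 / 2 ^ d) d (s - 1) = target_left x y d s"
  by (simp add: target_left_def diff_divide_distrib)

lemma target_right_delay: "target_right x (y + 1 / 2 ^ d) d (t - 1) = target_right x y d t"
  by (simp add: target_right_def diff_divide_distrib)

lemma target_left_split_left:
  "target_left (x - 1 / 2 ^ (d + 1)) (y + 1 / 2 ^ (d + 1)) (d + 1) (2 * (s - 1/2))
    = target_left x y d s"
  by (simp add: target_left_def field_simps)

lemma target_right_split_left:
  "target_right (x - 1 / 2 ^ (d + 1)) (y + 1 / 2 ^ (d + 1)) (d + 1) (2 * ((s + t) / 2 - 1/2))
    = midpoint (target_left x y d s) (target_right x y d t)"
  by (simp add: target_left_def target_right_def midpoint_def field_simps)

lemma target_left_split_right:
  "target_left (x + 1 / 2 ^ (d + 1)) (y + 1 / 2 ^ (d + 1)) (d + 1) (2 * ((s + t) / 2 - 1/2))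
    = midpoint (target_left x y d s) (target_right x y d t)"
  by (simp add: target_left_def target_right_def midpoint_def field_simps)

lemma target_right_split_right:
  "target_right (x + 1 / 2 ^ (d + 1)) (y + 1 / 2 ^ (d + 1)) (d + 1) (2 * (t - 1/2))
    = target_right x y d t"
  by (simp add: target_right_def field_simps)

lemma midpoint_in_convex:
  assumes "convex C" "a \<in> C" "b \<in> C"
  shows "midpoint a b \<in> C"
  using closed_segment_subset[OF assms(2,3,1)] midpoint_in_closed_segment by blast

lemma tree_node_targets_in_convex:
  assumes "convex C" "(-1, s0) \<in> C" "(1, t0) \<in> C"
    and "tree_node s0 t0 x y d s t"
  shows "target_left x y d s \<in> C \<and> target_right x y d t \<in> C"
  using assms(4)
proof (induction rule: tree_node.induct)
  case root
  then show ?case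
    using assms(2,3) by (simp add: target_left_def target_right_def)
next
  case delay
  then show ?case
    by (simp add: target_left_delay target_right_delay)
next
  case split_left
  then show ?case
    unfolding target_left_split_left target_right_split_left
    by (blast intro: midpoint_in_convex[OF assms(1)])
next
  case split_right
  then show ?case
    unfolding target_left_split_right target_right_split_right
    by (blast intro: midpoint_in_convex[OF assms(1)])
qed

lemma tree_node_param_diff:
  assumes "tree_node s0 t0 x y d s t"
  shows "t - s = t0 - s0"
  using assms by induction (auto simp: field_simps)

lemma tree_node_params_ge_1:
  assumes "s0 \<ge> 1" "t0 \<ge> 1" "tree_node s0 t0 x y d s t"
  shows "s \<ge> 1 \<and> t \<ge> 1"
  using assms(3) by induction (use assms(1,2) in auto)

theorem lemma1:
  fixes s0 t0 x y s t :: real and d :: nat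
  assumes "s0 \<ge> 1" and "t0 \<ge> 1"
    and "tree_node s0 t0 x y d s t"
  shows "s \<ge> 1 \<and> t \<ge> 1
    \<and> (t - s) / 2 = (t0 - s0) / 2
    \<and> (x - 1 / 2 ^ d, y + s / 2 ^ d) \<in> closed_segment (-1, s0) (1, t0)
    \<and> (x + 1 / 2 ^ d, y + t / 2 ^ d) \<in> closed_segment (-1, s0) (1, t0)"
  using tree_node_params_ge_1[OF assms] tree_node_param_diff[OF assms(3)]
    tree_node_targets_in_convex[OF convex_closed_segment ends_in_segment assms(3)]
  by (simp add: target_left_def target_right_def)

end
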